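(* Let $0<\alpha<\frac12$, let $k\ge1$ be an integer, and let $z_1,\ldots,z_k$ be independent random variables each uniformly distributed on $[\alpha-\frac12,\frac12-\alpha]$, with mean $\bar z=\frac1k\sum_{i=1}^k z_i$. Then for any $\beta>0$, \[\mathbb{E}\Bigl(\exp\Bigl(-\beta\sum_{i=1}^k (z_i-\bar z)^2\Bigr)\Bigr)\le k^{1/2}\Bigl(\frac{\pi}{(1-2\alpha)^2\beta}\Bigr)^{(k-1)/2}.\] *)

theory Defs
  imports "HOL-Probability.Probability"
begin

end

(* Write S_n(x) for the sum of squared deviations of x_1, ..., x_n from their mean m_n.
   Adding a coordinate gives the update S_(n+1)(x) = S_n(x) + n/(n+1) (x_(n+1) - m_n)^2, so
   integrating exp(-beta S_(n+1)) in x_(n+1) against the uniform density 1/(b-a) leaves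
   exp(-beta S_n) times a Gaussian integral over [a,b].  Bounding the latter by the Gaussian
   integral over the whole line, each new coordinate costs at most a factor
   sqrt((n+1)/n) sqrt(pi/beta)/(b-a); the factors telescope to sqrt k (sqrt(pi/beta)/(b-a))^(k-1).
   Independence identifies the expectation with this integral over the product measure. *)
theory Submission
  imports Defs
begin

definition sum_sq_dev :: "nat \<Rightarrow> (nat \<Rightarrow> real) \<Rightarrow> real" where
  "sum_sq_dev n x = (\<Sum>i=1..n. (x i - (\<Sum>j=1..n. x j) / n)\<^sup>2)"

lemma sum_sq_dev_eq: "sum_sq_dev n x = (\<Sum>i=1..n. (x i)\<^sup>2) - (\<Sum>i=1..n. x i)\<^sup>2 / n"
proof -
  define s where "s = (\<Sum>i=1..n. x i)"
  have "sum_sq_dev n x = (\<Sum>i=1..n. (x i)\<^sup>2 - 2 * (s / n) * x i + (s / n)\<^sup>2)"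
    unfolding sum_sq_dev_def s_def[symmetric] by (intro sum.cong) (auto simp: power2_diff)
  also have "\<dots> = (\<Sum>i=1..n. (x i)\<^sup>2) - 2 * (s / n) * s + n * (s / n)\<^sup>2"
    by (simp add: sum.distrib sum_subtractf s_def flip: sum_divide_distrib sum_distrib_left)
  also have "\<dots> = (\<Sum>i=1..n. (x i)\<^sup>2) - s\<^sup>2 / n"
    by (cases "n = 0") (simp_all add: field_simps power2_eq_square)
  finally show ?thesis
    by (simp add: s_def)
qed

lemma sum_sq_dev_Suc:
  "sum_sq_dev (Suc n) x
     = sum_sq_dev n x + n / (real n + 1) * (x (Suc n) - (\<Sum>i=1..n. x i) / n)\<^sup>2"
proof (cases "n = 0")
  case True
  then show ?thesis
    by (simp add: sum_sq_dev_def)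
next
  case False
  define s where "s = (\<Sum>i=1..n. x i)"
  define q where "q = (\<Sum>i=1..n. (x i)\<^sup>2)"
  have "sum_sq_dev (Suc n) x = q + (x (Suc n))\<^sup>2 - (s + x (Suc n))\<^sup>2 / (real n + 1)"
    by (simp add: sum_sq_dev_eq s_def q_def add.commute)
  also have "\<dots> = q - s\<^sup>2 / n + n / (real n + 1) * (x (Suc n) - s / n)\<^sup>2"
    using False by (simp add: divide_simps power2_eq_square) (simp add: algebra_simps)
  finally show ?thesis
    by (simp add: sum_sq_dev_eq s_def q_def)
qed

lemma sum_sq_dev_cong:
  "(\<And>i. i \<in> {1..n} \<Longrightarrow> x i = y i) \<Longrightarrow> sum_sq_dev n x = sum_sq_dev n y"
  unfolding sum_sq_dev_def by (metis (no_types, lifting) sum.cong)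

lemma measurable_sum_sq_dev:
  assumes "sets N = sets borel"
  shows "sum_sq_dev n \<in> borel_measurable (PiM {1..n} (\<lambda>_. N))"
proof -
  have [measurable]: "(\<lambda>x. x i) \<in> borel_measurable (PiM {1..n} (\<lambda>_. N))" if "i \<in> {1..n}" for i
    using measurable_component_singleton[OF that, of "\<lambda>_. N"]
    unfolding measurable_cong_sets[OF refl assms] .
  show ?thesis
    unfolding sum_sq_dev_def by measurable
qed

lemma nn_integral_exp_neg_square:
  fixes c m :: real
  assumes "c > 0"
  shows "(\<integral>\<^sup>+ y. exp (- c * (y - m)\<^sup>2) \<partial>lborel) = sqrt (pi / c)"
proof -
  define \<sigma> where "\<sigma> = sqrt (1 / (2 * c))"
  have \<sigma>: "\<sigma> > 0" "\<sigma>\<^sup>2 = 1 / (2 * c)"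
    using assms by (auto simp: \<sigma>_def)
  have density: "exp (- c * (y - m)\<^sup>2) = sqrt (pi / c) * normal_density m \<sigma> y" for y
  proof -
    have "2 * pi * \<sigma>\<^sup>2 = pi / c" "- (y - m)\<^sup>2 / (2 * \<sigma>\<^sup>2) = - c * (y - m)\<^sup>2"
      using \<sigma> assms by (simp_all add: field_simps)
    then show ?thesis
      using assms by (simp add: normal_density_def)
  qed
  have "(\<integral>\<^sup>+ y. exp (- c * (y - m)\<^sup>2) \<partial>lborel)
      = sqrt (pi / c) * (\<integral>\<^sup>+ y. normal_density m \<sigma> y \<partial>lborel)"
    unfolding density using assms by (simp add: ennreal_mult nn_integral_cmult)
  also have "(\<integral>\<^sup>+ y. normal_density m \<sigma> y \<partial>lborel) = 1"
    using \<sigma>(1) by (subst nn_integral_eq_integral) auto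
  finally show ?thesis
    by simp
qed

lemma nn_integral_uniform_exp_neg_square_le:
  fixes a b c m :: real
  assumes "c > 0" "a < b"
  shows "(\<integral>\<^sup>+ y. exp (- c * (y - m)\<^sup>2) \<partial>uniform_measure lborel {a..b})
           \<le> sqrt (pi / c) / (b - a)"
proof -
  have "(\<integral>\<^sup>+ y. exp (- c * (y - m)\<^sup>2) \<partial>uniform_measure lborel {a..b})
      = (\<integral>\<^sup>+ y \<in> {a..b}. exp (- c * (y - m)\<^sup>2) \<partial>lborel) / (b - a)"
    using assms by (subst nn_integral_uniform_measure) auto
  also have "\<dots> \<le> (\<integral>\<^sup>+ y. exp (- c * (y - m)\<^sup>2) \<partial>lborel) / (b - a)"
    by (intro divide_right_mono_ennreal nn_integral_mono) (auto simp: indicator_def)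
  also have "\<dots> = sqrt (pi / c) / (b - a)"
    unfolding nn_integral_exp_neg_square[OF assms(1)] using assms by (simp add: divide_ennreal)
  finally show ?thesis .
qed

lemma nn_integral_uniform_exp_sum_sq_dev_Suc_le:
  fixes a b \<beta> :: real
  assumes "a < b" "\<beta> > 0" "n \<ge> 1"
  shows "(\<integral>\<^sup>+ y. exp (- \<beta> * sum_sq_dev (Suc n) (x(Suc n := y))) \<partial>uniform_measure lborel {a..b})
           \<le> ennreal (exp (- \<beta> * sum_sq_dev n x))
              * ennreal (sqrt ((real n + 1) / n) * (sqrt (pi / \<beta>) / (b - a)))"
proof -
  define m where "m = (\<Sum>i=1..n. x i) / n"
  define d where "d = n / (real n + 1) * \<beta>"
  have "d > 0"
    using assms by (simp add: d_def)
  have split: "exp (- \<beta> * sum_sq_dev (Suc n) (x(Suc n := y)))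
      = exp (- \<beta> * sum_sq_dev n x) * exp (- d * (y - m)\<^sup>2)" for y
  proof -
    have "sum_sq_dev n (x(Suc n := y)) = sum_sq_dev n x"
      "(\<Sum>i=1..n. (x(Suc n := y)) i) = (\<Sum>i=1..n. x i)"
      by (auto intro: sum_sq_dev_cong sum.cong)
    then show ?thesis
      by (simp add: sum_sq_dev_Suc m_def d_def algebra_simps flip: exp_add)
  qed
  have "(\<integral>\<^sup>+ y. exp (- \<beta> * sum_sq_dev (Suc n) (x(Suc n := y))) \<partial>uniform_measure lborel {a..b})
      = exp (- \<beta> * sum_sq_dev n x)
          * (\<integral>\<^sup>+ y. exp (- d * (y - m)\<^sup>2) \<partial>uniform_measure lborel {a..b})"
    unfolding split by (simp add: ennreal_mult nn_integral_cmult)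
  also have "\<dots> \<le> exp (- \<beta> * sum_sq_dev n x) * ennreal (sqrt (pi / d) / (b - a))"
    using \<open>d > 0\<close> assms(1) by (intro mult_left_mono nn_integral_uniform_exp_neg_square_le) auto
  also have "sqrt (pi / d) = sqrt ((real n + 1) / n) * sqrt (pi / \<beta>)"
    using assms(2,3) by (simp add: d_def field_simps flip: real_sqrt_mult)
  finally show ?thesis
    by (simp only: times_divide_eq_right)
qed

lemma nn_integral_PiM_Suc:
  assumes "sigma_finite_measure U" "f \<in> borel_measurable (PiM {1..Suc n} (\<lambda>_. U))"
  shows "(\<integral>\<^sup>+ x. f x \<partial>PiM {1..Suc n} (\<lambda>_. U))
           = (\<integral>\<^sup>+ x. (\<integral>\<^sup>+ y. f (x(Suc n := y)) \<partial>U) \<partial>PiM {1..n} (\<lambda>_. U))"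
proof -
  interpret product_sigma_finite "\<lambda>_::nat. U"
    using assms(1) by (simp add: product_sigma_finite_def)
  have insert: "{1..Suc n} = insert (Suc n) {1..n}"
    by auto
  show ?thesis
    using assms(2) unfolding insert by (rule product_nn_integral_insert[rotated 2]) auto
qed

lemma nn_integral_PiM_uniform_exp_sum_sq_dev_le:
  fixes a b \<beta> :: real
  assumes "a < b" "\<beta> > 0" "n \<ge> 1"
  shows "(\<integral>\<^sup>+ x. exp (- \<beta> * sum_sq_dev n x) \<partial>PiM {1..n} (\<lambda>_. uniform_measure lborel {a..b}))
           \<le> sqrt n * (sqrt (pi / \<beta>) / (b - a)) ^ (n - 1)"
  using assms(3)
proof (induction n rule: nat_induct_at_least)
  case base
  have "prob_space (PiM {Suc 0} (\<lambda>_. uniform_measure lborel {a..b}))"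
    using assms(1) by (intro prob_space_PiM prob_space_uniform_measure) auto
  then show ?case
    by (simp add: sum_sq_dev_def prob_space.emeasure_space_1)
next
  case (Suc n)
  define U where "U = uniform_measure lborel {a..b}"
  define c where "c = sqrt (pi / \<beta>) / (b - a)"
  define K where "K = sqrt ((real n + 1) / n) * c"
  have "c > 0"
    using assms(1,2) by (simp add: c_def)
  have "sets U = sets borel"
    by (simp add: U_def)
  note measurable_sum_sq_dev[OF this, measurable]
  have "sigma_finite_measure U"
    using assms(1) unfolding U_def
    by (intro prob_space_imp_sigma_finite prob_space_uniform_measure) auto
  then have "(\<integral>\<^sup>+ x. exp (- \<beta> * sum_sq_dev (Suc n) x) \<partial>PiM {1..Suc n} (\<lambda>_. U))
      = (\<integral>\<^sup>+ x. (\<integral>\<^sup>+ y. exp (- \<beta> * sum_sq_dev (Suc n) (x(Suc n := y))) \<partial>U)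
           \<partial>PiM {1..n} (\<lambda>_. U))"
    by (rule nn_integral_PiM_Suc) measurable
  also have "\<dots> \<le> (\<integral>\<^sup>+ x. exp (- \<beta> * sum_sq_dev n x) * ennreal K \<partial>PiM {1..n} (\<lambda>_. U))"
    unfolding U_def K_def c_def
    by (intro nn_integral_mono nn_integral_uniform_exp_sum_sq_dev_Suc_le assms Suc.hyps)
  also have "\<dots> = (\<integral>\<^sup>+ x. exp (- \<beta> * sum_sq_dev n x) \<partial>PiM {1..n} (\<lambda>_. U)) * ennreal K"
    by (rule nn_integral_multc) measurable
  also have "\<dots> \<le> ennreal (sqrt n * c ^ (n - 1)) * ennreal K"
    using Suc.IH unfolding U_def c_def by (intro mult_right_mono) auto
  also have "\<dots> = ennreal (sqrt (Suc n) * c ^ (Suc n - 1))"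
  proof -
    have "sqrt n * c ^ (n - 1) * K = (sqrt n * sqrt ((real n + 1) / n)) * (c ^ (n - 1) * c)"
      unfolding K_def by (simp only: ac_simps)
    also have "sqrt n * sqrt ((real n + 1) / n) = sqrt (Suc n)"
      using Suc.hyps by (simp add: field_simps flip: real_sqrt_mult)
    also have "c ^ (n - 1) * c = c ^ (Suc n - 1)"
      using Suc.hyps by (simp add: power_eq_if)
    finally show ?thesis
      using \<open>c > 0\<close> by (simp add: K_def flip: ennreal_mult)
  qed
  finally show ?case
    by (simp add: U_def c_def)
qed

lemma (in prob_space) nn_integral_indep_vars_eq_PiM:
  assumes "I \<noteq> {}" "\<And>i. i \<in> I \<Longrightarrow> random_variable (N i) (X i)" "indep_vars N X I"
    and "f \<in> borel_measurable (PiM I N)"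
  shows "(\<integral>\<^sup>+ \<omega>. f (\<lambda>i\<in>I. X i \<omega>) \<partial>M)
           = (\<integral>\<^sup>+ x. f x \<partial>PiM I (\<lambda>i. distr M (N i) (X i)))"
proof -
  have "(\<lambda>\<omega>. \<lambda>i\<in>I. X i \<omega>) \<in> measurable M (PiM I N)"
    using assms(2) by (rule measurable_restrict)
  with assms(4) have "(\<integral>\<^sup>+ \<omega>. f (\<lambda>i\<in>I. X i \<omega>) \<partial>M)
      = (\<integral>\<^sup>+ x. f x \<partial>distr M (PiM I N) (\<lambda>\<omega>. \<lambda>i\<in>I. X i \<omega>))"
    by (simp add: nn_integral_distr)
  also have "distr M (PiM I N) (\<lambda>\<omega>. \<lambda>i\<in>I. X i \<omega>) = PiM I (\<lambda>i. distr M (N i) (X i))"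
    using indep_vars_iff_distr_eq_PiM'[where M'=N, OF assms(1,2)] assms(3) by blast
  finally show ?thesis .
qed

lemma (in prob_space) expectation_exp_sum_sq_dev_uniform_le:
  fixes Z :: "nat \<Rightarrow> 'a \<Rightarrow> real" and a b \<beta> :: real
  assumes "a < b" "\<beta> > 0" "n \<ge> 1"
    and "\<And>i. i \<in> {1..n} \<Longrightarrow> random_variable borel (Z i)"
    and "indep_vars (\<lambda>_. borel) Z {1..n}"
    and "\<And>i. i \<in> {1..n} \<Longrightarrow> distr M borel (Z i) = uniform_measure lborel {a..b}"
  shows "expectation (\<lambda>\<omega>. exp (- \<beta> * sum_sq_dev n (\<lambda>i. Z i \<omega>)))
           \<le> sqrt n * (sqrt (pi / \<beta>) / (b - a)) ^ (n - 1)"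
proof -
  define g where "g = (\<lambda>x. exp (- \<beta> * sum_sq_dev n x))"
  define B where "B = sqrt n * (sqrt (pi / \<beta>) / (b - a)) ^ (n - 1)"
  have g: "g \<in> borel_measurable (PiM {1..n} (\<lambda>_. borel))"
    using measurable_sum_sq_dev[of borel n] unfolding g_def by measurable
  have Z: "(\<lambda>\<omega>. \<lambda>i\<in>{1..n}. Z i \<omega>) \<in> measurable M (PiM {1..n} (\<lambda>_. borel))"
    using assms(4) by (rule measurable_restrict)
  have "(\<integral>\<^sup>+ \<omega>. g (\<lambda>i\<in>{1..n}. Z i \<omega>) \<partial>M)
      = (\<integral>\<^sup>+ x. g x \<partial>PiM {1..n} (\<lambda>i. distr M borel (Z i)))"
    using assms(3-5) g by (intro nn_integral_indep_vars_eq_PiM) auto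
  also have "PiM {1..n} (\<lambda>i. distr M borel (Z i)) = PiM {1..n} (\<lambda>_. uniform_measure lborel {a..b})"
    using assms(6) by (intro PiM_cong) auto
  also have "(\<integral>\<^sup>+ x. g x \<partial>PiM {1..n} (\<lambda>_. uniform_measure lborel {a..b})) \<le> B"
    unfolding g_def B_def using assms(1-3) by (rule nn_integral_PiM_uniform_exp_sum_sq_dev_le)
  finally have bound: "(\<integral>\<^sup>+ \<omega>. g (\<lambda>i\<in>{1..n}. Z i \<omega>) \<partial>M) \<le> B" .
  have "expectation (\<lambda>\<omega>. g (\<lambda>i\<in>{1..n}. Z i \<omega>))
      = enn2real (\<integral>\<^sup>+ \<omega>. g (\<lambda>i\<in>{1..n}. Z i \<omega>) \<partial>M)"
    using measurable_compose[OF Z g] by (intro integral_eq_nn_integral) (simp_all add: g_def)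
  also have "\<dots> \<le> B"
    by (rule enn2real_leI[OF _ bound]) (use assms(1,2) in \<open>simp add: B_def\<close>)
  also have "(\<lambda>\<omega>. g (\<lambda>i\<in>{1..n}. Z i \<omega>))
      = (\<lambda>\<omega>. exp (- \<beta> * sum_sq_dev n (\<lambda>i. Z i \<omega>)))"
    unfolding g_def by (intro ext arg_cong[where f = "\<lambda>s. exp (- \<beta> * s)"] sum_sq_dev_cong) simp
  finally show ?thesis
    by (simp only: B_def)
qed

theorem lemma5:
  fixes M :: "'a measure" and Z :: "nat \<Rightarrow> 'a \<Rightarrow> real"
    and \<alpha> \<beta> :: real and k :: nat
  assumes "prob_space M"
    and "0 < \<alpha>" and "\<alpha> < 1/2"
    and "k \<ge> 1"
    and "\<beta> > 0"
    and "\<And>i. i \<in> {1..k} \<Longrightarrow> Z i \<in> borel_measurable M"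
    and "prob_space.indep_vars M (\<lambda>_. borel) Z {1..k}"
    and "\<And>i. i \<in> {1..k} \<Longrightarrow>
           distr M borel (Z i) = uniform_measure lborel {\<alpha> - 1/2 .. 1/2 - \<alpha>}"
  shows "prob_space.expectation M
           (\<lambda>\<omega>. exp (- \<beta> * (\<Sum>i=1..k. (Z i \<omega> - (\<Sum>j=1..k. Z j \<omega>) / real k)\<^sup>2)))
         \<le> sqrt (real k) * (pi / ((1 - 2*\<alpha>)\<^sup>2 * \<beta>)) powr ((real k - 1) / 2)"
proof -
  interpret prob_space M
    by fact
  have "1/2 - \<alpha> - (\<alpha> - 1/2) = 1 - 2*\<alpha>"
    by simp
  note bound = expectation_exp_sum_sq_dev_uniform_le[of "\<alpha> - 1/2" "1/2 - \<alpha>" \<beta> k Z, unfolded this]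
  have "expectation (\<lambda>\<omega>. exp (- \<beta> * sum_sq_dev k (\<lambda>i. Z i \<omega>)))
      \<le> sqrt k * (sqrt (pi / \<beta>) / (1 - 2*\<alpha>)) ^ (k - 1)"
    using assms(2-8) by (intro bound) auto
  also have "sqrt (pi / \<beta>) / (1 - 2*\<alpha>) = (pi / ((1 - 2*\<alpha>)\<^sup>2 * \<beta>)) powr (1/2)"
    using assms(2-5) by (simp add: powr_half_sqrt real_sqrt_divide real_sqrt_mult)
  also have "((pi / ((1 - 2*\<alpha>)\<^sup>2 * \<beta>)) powr (1/2)) ^ (k - 1)
      = (pi / ((1 - 2*\<alpha>)\<^sup>2 * \<beta>)) powr ((real k - 1) / 2)"
    using assms(2-5) by (simp add: powr_power of_nat_diff)
  finally show ?thesis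
    by (simp only: sum_sq_dev_def)
qed

end
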